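(* Let $B\in\mathbb R^{n\times m}$, let $T_{\mathcal P}$ be a symmetric positive definite $n\times n$ matrix, and let $h:\mathbb R^n\to\mathbb R$ be differentiable with $h\in\mathcal S^{1,1}_{\mu_{h,T_{\mathcal P}},L_{h,T_{\mathcal P}}}$ with respect to $T_{\mathcal P}$. For $u_1,u_2\in\mathbb R^m$, $p_1,p_2\in\mathbb R^n$, let $q_i=p_i-T_{\mathcal P}^{-1}Bu_i$. Then $$\big(\nabla h(p_1)-\nabla h(p_2),-T_{\mathcal P}^{-1}B(u_1-u_2)\big)\ge\frac{\mu_{h,T_{\mathcal P}}}{2}\|q_1-q_2\|^2_{T_{\mathcal P}}-\frac{L_{h,T_{\mathcal P}}}{2}\|B(u_1-u_2)\|^2_{T_{\mathcal P}^{-1}}-\frac12\big(\nabla h(p_1)-\nabla h(p_2),p_1-p_2\big).$$ In particular, when $h(p)=(b,p)$ is affine, equality holds with all terms equal to $0$.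
   Context: For SPD $M$, $\|x\|_M=(Mx,x)^{1/2}$; $D_h(y,x)=h(y)-h(x)-(\nabla h(x),y-x)$; $h\in\mathcal S^{1,1}_{\mu_{h,M},L_{h,M}}$ w.r.t. $M$ means $\frac{\mu_{h,M}}2\|x-y\|_M^2\le D_h(y,x)\le\frac{L_{h,M}}2\|x-y\|_M^2$ for all $x,y$, with $\mu_{h,M}\ge0$ (for affine $h$ one takes $\mu_{h,T_{\mathcal P}}=L_{h,T_{\mathcal P}}=0$). *)

theory Defs
  imports "HOL-Analysis.Analysis"
begin

definition spd :: "real^'n^'n \<Rightarrow> bool" where
  "spd M \<longleftrightarrow> transpose M = M \<and> (\<forall>x. x \<noteq> 0 \<longrightarrow> (M *v x) \<bullet> x > 0)"

definition Mnorm :: "real^'n^'n \<Rightarrow> real^'n \<Rightarrow> real" where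
  "Mnorm M x = sqrt ((M *v x) \<bullet> x)"

definition bregman :: "(real^'n \<Rightarrow> real) \<Rightarrow> (real^'n \<Rightarrow> real^'n) \<Rightarrow> real^'n \<Rightarrow> real^'n \<Rightarrow> real" where
  "bregman h gh y x = h y - h x - gh x \<bullet> (y - x)"

definition S11 :: "(real^'n \<Rightarrow> real) \<Rightarrow> (real^'n \<Rightarrow> real^'n) \<Rightarrow> real \<Rightarrow> real \<Rightarrow> real^'n^'n \<Rightarrow> bool" where
  "S11 h gh mu L M \<longleftrightarrow> mu \<ge> 0 \<and>
     (\<forall>x y. mu / 2 * (Mnorm M (x - y))^2 \<le> bregman h gh y x \<and>
            bregman h gh y x \<le> L / 2 * (Mnorm M (x - y))^2)"

end

theory Submission
  imports Defs
begin

text \<open>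
  With \<open>d = -T\<^sup>-\<^sup>1 B (u1 - u2)\<close> one has \<open>q1 - q2 = p1 - p2 + d\<close> and
  \<open>Mnorm T\<^sup>-\<^sup>1 (B (u1 - u2)) = Mnorm T d\<close>. Expand \<open>D(p1 + d, p2)\<close> through \<open>p1\<close> and
  \<open>D(p2 - d, p1)\<close> through \<open>p2\<close> by the three-point identity and add: the cross terms
  give \<open>2 (\<nabla>h p1 - \<nabla>h p2, d)\<close>, and \<open>D(p1, p2) + D(p2, p1) = (\<nabla>h p1 - \<nabla>h p2, p1 - p2)\<close>.
  Both left-hand points are at \<open>T\<close>-distance \<open>Mnorm T (p1 - p2 + d)\<close> from their base point
  (strong convexity bounds them below), and the two leftover distances are over a step
  of length \<open>Mnorm T d\<close> (smoothness bounds them above). No property of \<open>T\<close> is needed for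
  this inequality; positive definiteness only makes \<open>T\<close> invertible.
  For affine \<open>h\<close> the gradient is the constant \<open>b\<close>, so every term vanishes.
\<close>

lemma matrix_vector_mult_uminus: "(A :: real^'m^'n) *v (- x) = - (A *v x)"
  using matrix_vector_mult_diff_distrib[of A 0 x] by simp

lemma Mnorm_uminus: "Mnorm M (- x) = Mnorm M x"
  unfolding Mnorm_def by (simp add: matrix_vector_mult_uminus)

lemma Mnorm_minus_commute: "Mnorm M (x - y) = Mnorm M (y - x)"
  using Mnorm_uminus[of M "x - y"] by simp

lemma spd_invertible:
  assumes "spd T"
  shows "invertible T"
proof -
  have "T *v x = 0 \<Longrightarrow> x = 0" for x
    using assms unfolding spd_def by (metis inner_zero_left less_irrefl)
  then show ?thesis
    using matrix_left_invertible_ker invertible_left_inverse by blast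
qed

lemma matrix_inv_right:
  assumes "invertible (A :: real^'n^'n)"
  shows "A ** matrix_inv A = mat 1"
  using assms unfolding invertible_def matrix_inv_def by (rule someI2_ex) blast

lemma Mnorm_matrix_inv:
  assumes "spd T"
  shows "Mnorm (matrix_inv T) v = Mnorm T (matrix_inv T *v v)"
proof -
  have "T *v (matrix_inv T *v v) = v"
    using matrix_inv_right[OF spd_invertible[OF assms]] by (simp add: matrix_vector_mul_assoc)
  then show ?thesis
    unfolding Mnorm_def by (simp add: inner_commute)
qed

lemma bregman_three_point:
  "bregman h gh z x = bregman h gh y x + (gh y - gh x) \<bullet> (z - y) + bregman h gh z y"
  unfolding bregman_def by (simp add: inner_diff_left inner_diff_right algebra_simps)

lemma bregman_symmetrized:
  "bregman h gh y x + bregman h gh x y = (gh y - gh x) \<bullet> (y - x)"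
  unfolding bregman_def by (simp add: inner_diff_left inner_diff_right algebra_simps)

lemma S11_bregman_lower:
  "S11 h gh mu L M \<Longrightarrow> mu / 2 * (Mnorm M (y - x))^2 \<le> bregman h gh y x"
  unfolding S11_def by (metis Mnorm_minus_commute)

lemma S11_bregman_upper:
  "S11 h gh mu L M \<Longrightarrow> bregman h gh y x \<le> L / 2 * (Mnorm M (y - x))^2"
  unfolding S11_def by (metis Mnorm_minus_commute)

lemma S11_gradient_inner_lower_bound:
  assumes hS: "S11 h gh mu L M"
  shows "(gh p1 - gh p2) \<bullet> d \<ge> mu / 2 * (Mnorm M (p1 - p2 + d))^2
           - L / 2 * (Mnorm M d)^2 - 1/2 * ((gh p1 - gh p2) \<bullet> (p1 - p2))"
proof -
  let ?D = "bregman h gh" and ?g = "gh p1 - gh p2" and ?w = "p1 - p2 + d"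
  have "?D (p1 + d) p2 = ?D p1 p2 + ?g \<bullet> d + ?D (p1 + d) p1"
    using bregman_three_point[of h gh "p1 + d" p2 p1] by simp
  moreover have "?D (p2 - d) p1 = ?D p2 p1 + ?g \<bullet> d + ?D (p2 - d) p2"
    using bregman_three_point[of h gh "p2 - d" p1 p2] by (simp add: inner_diff_left)
  moreover have "?D p1 p2 + ?D p2 p1 = ?g \<bullet> (p1 - p2)"
    by (rule bregman_symmetrized)
  moreover have "mu / 2 * (Mnorm M ?w)^2 \<le> ?D (p1 + d) p2"
    using S11_bregman_lower[OF hS, of "p1 + d" p2] by (simp add: algebra_simps)
  moreover have "mu / 2 * (Mnorm M ?w)^2 \<le> ?D (p2 - d) p1"
    using S11_bregman_lower[OF hS, of "p2 - d" p1] Mnorm_uminus[of M ?w]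
    by (simp add: algebra_simps)
  moreover have "?D (p1 + d) p1 \<le> L / 2 * (Mnorm M d)^2"
    using S11_bregman_upper[OF hS, of "p1 + d" p1] by simp
  moreover have "?D (p2 - d) p2 \<le> L / 2 * (Mnorm M d)^2"
    using S11_bregman_upper[OF hS, of "p2 - d" p2] by (simp add: Mnorm_uminus)
  ultimately show ?thesis
    by linarith
qed

lemma gradient_of_linear_functional:
  assumes "((\<lambda>p. b \<bullet> p) has_derivative (\<lambda>v. g \<bullet> v)) (at x)"
  shows "g = b"
proof -
  have "((\<lambda>p. b \<bullet> p) has_derivative (\<lambda>v. b \<bullet> v)) (at x)"
    by (intro derivative_eq_intros) auto
  then have "(\<lambda>v. g \<bullet> v) = (\<lambda>v. b \<bullet> v)"
    using has_derivative_unique[OF assms] by blast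
  then have "(g - b) \<bullet> (g - b) = 0"
    by (metis inner_diff_left right_minus_eq)
  then show ?thesis
    by simp
qed

theorem lemma5p2:
  fixes B :: "real^'m^'n" and T :: "real^'n^'n"
    and h :: "real^'n \<Rightarrow> real" and gh :: "real^'n \<Rightarrow> real^'n"
    and mu L :: real
  assumes T_spd: "spd T"
    and grad: "\<And>x. (h has_derivative (\<lambda>v. gh x \<bullet> v)) (at x)"
    and hS: "S11 h gh mu L T"
  shows "(\<forall>u1 u2 :: real^'m. \<forall>p1 p2 :: real^'n.
      let q1 = p1 - matrix_inv T *v (B *v u1);
          q2 = p2 - matrix_inv T *v (B *v u2)
      in (gh p1 - gh p2) \<bullet> (- (matrix_inv T *v (B *v (u1 - u2))))
         \<ge> mu / 2 * (Mnorm T (q1 - q2))^2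
           - L / 2 * (Mnorm (matrix_inv T) (B *v (u1 - u2)))^2
           - 1/2 * ((gh p1 - gh p2) \<bullet> (p1 - p2)))
    \<and> (\<forall>b :: real^'n. (\<forall>p. h p = b \<bullet> p) \<and> mu = 0 \<and> L = 0 \<longrightarrow>
      (\<forall>u1 u2 :: real^'m. \<forall>p1 p2 :: real^'n.
        let q1 = p1 - matrix_inv T *v (B *v u1);
            q2 = p2 - matrix_inv T *v (B *v u2)
        in (gh p1 - gh p2) \<bullet> (- (matrix_inv T *v (B *v (u1 - u2)))) = 0
           \<and> mu / 2 * (Mnorm T (q1 - q2))^2 = 0
           \<and> L / 2 * (Mnorm (matrix_inv T) (B *v (u1 - u2)))^2 = 0
           \<and> 1/2 * ((gh p1 - gh p2) \<bullet> (p1 - p2)) = 0))"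
proof (intro conjI allI impI)
  fix u1 u2 :: "real^'m" and p1 p2 :: "real^'n"
  define d where "d = - (matrix_inv T *v (B *v (u1 - u2)))"
  have q: "(p1 - matrix_inv T *v (B *v u1)) - (p2 - matrix_inv T *v (B *v u2)) = p1 - p2 + d"
    unfolding d_def by (simp add: matrix_vector_mult_diff_distrib)
  have Bu: "Mnorm (matrix_inv T) (B *v (u1 - u2)) = Mnorm T d"
    unfolding d_def Mnorm_uminus by (rule Mnorm_matrix_inv[OF T_spd])
  show "let q1 = p1 - matrix_inv T *v (B *v u1);
          q2 = p2 - matrix_inv T *v (B *v u2)
      in (gh p1 - gh p2) \<bullet> (- (matrix_inv T *v (B *v (u1 - u2))))
         \<ge> mu / 2 * (Mnorm T (q1 - q2))^2
           - L / 2 * (Mnorm (matrix_inv T) (B *v (u1 - u2)))^2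
           - 1/2 * ((gh p1 - gh p2) \<bullet> (p1 - p2))"
    unfolding Let_def q Bu d_def[symmetric] by (rule S11_gradient_inner_lower_bound[OF hS])
next
  fix b :: "real^'n" and u1 u2 :: "real^'m" and p1 p2 :: "real^'n"
  assume affine: "(\<forall>p. h p = b \<bullet> p) \<and> mu = 0 \<and> L = 0"
  then have "h = (\<lambda>p. b \<bullet> p)"
    by auto
  then have "gh x = b" for x
    using grad[of x] by (simp add: gradient_of_linear_functional)
  then show "let q1 = p1 - matrix_inv T *v (B *v u1);
            q2 = p2 - matrix_inv T *v (B *v u2)
        in (gh p1 - gh p2) \<bullet> (- (matrix_inv T *v (B *v (u1 - u2)))) = 0
           \<and> mu / 2 * (Mnorm T (q1 - q2))^2 = 0
           \<and> L / 2 * (Mnorm (matrix_inv T) (B *v (u1 - u2)))^2 = 0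
           \<and> 1/2 * ((gh p1 - gh p2) \<bullet> (p1 - p2)) = 0"
    using affine by (simp add: Let_def)
qed

end
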